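(* Consider the iterates of SAS-ADMM (defined in the context) and fix an outer index $k\ge 0$ with $\eta_k\in(0,1/\nu)$. Then for every $w=(x;y;\lambda)\in\Omega$, $$F(w)-F(\tilde w^k)+\langle w-\tilde w^k,\mathcal J(w)\rangle\;\ge\;(w-\tilde w^k)^\top Q_k\,(w^k-\tilde w^k)+\zeta^k(x),$$ where $$Q_k=\begin{bmatrix}\mathcal D_k&0&0\\0&L+\beta B^\top B&-\tau B^\top\\0&-B&\frac1\beta I\end{bmatrix}.$$ (The inequality holds for every realization of the random quantities.)
   Context: Setting. $\mathcal X\subset\mathbb R^{n_1}$, $\mathcal Y\subset\mathbb R^{n_2}$ are nonempty closed convex sets; $A\in\mathbb R^{n\times n_1}$, $B\in\mathbb R^{n\times n_2}$, $b\in\mathbb R^n$; $g:\mathcal Y\to\mathbb R\cup\{+\infty\}$ is proper convex; $f=\frac1N\sum_{j=1}^N f_j$, each $f_j$ real-valued, convex and continuously differentiable on an open set containing $\mathcal X$. The problem is $\min\{f(x)+g(y): x\in\mathcal X,\ y\in\mathcal Y,\ Ax+By=b\}$. A fixed symmetric positive definite $H\in\mathbb R^{n_1\times n_1}$ and a constant $\nu>0$ satisfy $\|\nabla f_j(x_1)-\nabla f_j(x_2)\|_{H^{-1}}\le \nu\|x_1-x_2\|_H$ for all $x_1,x_2\in\mathcal X$ and all $j$. For a symmetric matrix $G$, $\|v\|_G^2:=v^\top G v$ (also when $G$ is indefinite); $G_1\succeq G_2$ means $G_1-G_2$ is positive semidefinite. $\mathcal L_\beta(x,y,\lambda)=f(x)+g(y)-\lambda^\top(Ax+By-b)+\frac\beta2\|Ax+By-b\|^2$.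 $\Delta:=\{(\tau,s)\in\mathbb R^2:\ \tau+s>0,\ \tau\le1,\ -\tau^2-s^2-\tau s+\tau+s+1\ge0\}$. Subroutine xsub. Inputs: $x^k\in\mathcal X$, $\breve x^k$, $h\in\mathbb R^{n_1}$, an integer $m_k\ge1$, $\eta_k>0$, a symmetric matrix $M_k$. Set $x_1=x^k$, $\breve x_1=\breve x^k$. For $t=1,\dots,m_k$: draw $\xi_t$ uniformly from $\{1,\dots,N\}$, independently of everything generated before; set $\beta_t=2/(t+1)$, $\gamma_t=2/(t\eta_k)$, $\hat x_t=\beta_t\breve x_t+(1-\beta_t)x_t$, $d_t=\nabla f_{\xi_t}(\hat x_t)+e_t$ where $e_t$ is a random vector whose conditional expectation given all previously generated random quantities and $\xi_t$ is $0$; $\breve x_{t+1}=\arg\min_{x\in\mathcal X}\{\langle d_t+h,x\rangle+\frac{\gamma_t}2\|x-\breve x_t\|_H^2+\frac12\|x-x^k\|_{M_k}^2\}$; $x_{t+1}=\beta_t\breve x_{t+1}+(1-\beta_t)x_t$. Output $x^{k+1}=x_{m_k+1}$, $\breve x^{k+1}=\breve x_{m_k+1}$. Put $\delta_t=\nabla f(\hat x_t)-d_t$ (inner quantities of outer iteration $k$), and for $x\in\mathcal X$ $$\zeta^k(x)=\frac{2}{m_k(m_k+1)}\Big[\frac1{\eta_k}\big(\|x-\breve x^{k+1}\|_H^2-\|x-\breve x^k\|_H^2\big)-\sum_{t=1}^{m_k}t\langle\delta_t,\breve x_t-x\rangle-\frac{\eta_k}{4(1-\eta_k\nu)}\sum_{t=1}^{m_k}t^2\|\delta_t\|_{H^{-1}}^2\Big].$$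 Algorithm SAS-ADMM. Parameters: $\beta>0$, the matrix $H$, a symmetric positive semidefinite $L\in\mathbb R^{n_2\times n_2}$, $(\tau,s)\in\Delta$. Start: $(x^0,y^0,\lambda^0)\in\mathcal X\times\mathcal Y\times\mathbb R^n$, $\breve x^0=x^0$. For $k=0,1,\dots$: choose an integer $m_k\ge1$, $\eta_k>0$, and a symmetric $M_k$ with $\mathcal D_k:=M_k-\beta A^\top A\succeq0$; set $h^k=-A^\top[\lambda^k-\beta(Ax^k+By^k-b)]$; compute $(x^{k+1},\breve x^{k+1})$ by xsub with inputs $x^k,\breve x^k,h^k,m_k,\eta_k,M_k$; $\lambda^{k+1/2}=\lambda^k-\tau\beta(Ax^{k+1}+By^k-b)$; $y^{k+1}\in\arg\min_{y\in\mathcal Y}\mathcal L_\beta(x^{k+1},y,\lambda^{k+1/2})+\frac12\|y-y^k\|_L^2$ (a minimizer is assumed to exist); $\lambda^{k+1}=\lambda^{k+1/2}-s\beta(Ax^{k+1}+By^{k+1}-b)$. Notation. $\Omega=\mathcal X\times\mathcal Y\times\mathbb R^n$; $w=(x;y;\lambda)$; $F(w)=f(x)+g(y)$; $\mathcal J(w)=(-A^\top\lambda;\,-B^\top\lambda;\,Ax+By-b)$; $w^k=(x^k;y^k;\lambda^k)$; $\tilde\lambda^k=\lambda^k-\beta(Ax^{k+1}+By^k-b)$; $\tilde w^k=(x^{k+1};y^{k+1};\tilde\lambda^k)$. *)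

theory Defs
  imports "HOL-Analysis.Analysis" "HOL-Library.Extended_Real"
begin

text \<open>Quadratic form / squared G-norm: qn G v = v' G v (also for indefinite G).\<close>
definition qn :: "real^'n^'n \<Rightarrow> real^'n \<Rightarrow> real" where
  "qn G v = v \<bullet> (G *v v)"

definition sym_mat :: "real^'n^'n \<Rightarrow> bool" where
  "sym_mat G \<longleftrightarrow> transpose G = G"

definition psd_mat :: "real^'n^'n \<Rightarrow> bool" where
  "psd_mat G \<longleftrightarrow> sym_mat G \<and> (\<forall>v. 0 \<le> qn G v)"

definition pd_mat :: "real^'n^'n \<Rightarrow> bool" where
  "pd_mat G \<longleftrightarrow> sym_mat G \<and> (\<forall>v. v \<noteq> 0 \<longrightarrow> 0 < qn G v)"

definition convex_ereal_on :: "'a::real_vector set \<Rightarrow> ('a \<Rightarrow> ereal) \<Rightarrow> bool" where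
  "convex_ereal_on S g \<longleftrightarrow> (\<forall>u\<in>S. \<forall>v\<in>S. \<forall>t::real. 0 \<le> t \<and> t \<le> 1 \<longrightarrow>
      g ((1 - t) *\<^sub>R u + t *\<^sub>R v) \<le> ereal (1 - t) * g u + ereal t * g v)"

definition proper_convex_on :: "'a::real_vector set \<Rightarrow> ('a \<Rightarrow> ereal) \<Rightarrow> bool" where
  "proper_convex_on S g \<longleftrightarrow> convex_ereal_on S g \<and> (\<forall>y\<in>S. g y \<noteq> -\<infinity>) \<and> (\<exists>y\<in>S. g y \<noteq> \<infinity>)"

definition Delta_region :: "(real \<times> real) set" where
  "Delta_region = {(a, c). a + c > 0 \<and> a \<le> 1 \<and> - (a^2) - c^2 - a * c + a + c + 1 \<ge> (0::real)}"

definition aug_lag ::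
  "(real^'a \<Rightarrow> real) \<Rightarrow> (real^'b \<Rightarrow> ereal) \<Rightarrow> real^'a^'c \<Rightarrow> real^'b^'c \<Rightarrow> real^'c \<Rightarrow> real
     \<Rightarrow> real^'a \<Rightarrow> real^'b \<Rightarrow> real^'c \<Rightarrow> ereal" where
  "aug_lag f g A B b \<beta> x y lam =
     ereal (f x) + g y + ereal (- (lam \<bullet> (A *v x + B *v y - b)) + \<beta> / 2 * (norm (A *v x + B *v y - b))^2)"

text \<open>The error term zeta^k(x) of outer iteration k, given the inner quantities
  delta_t, breve-x_t (t = 1..m), breve-x^k, breve-x^{k+1}.\<close>
definition zeta ::
  "real^'a^'a \<Rightarrow> real \<Rightarrow> real \<Rightarrow> nat \<Rightarrow> (nat \<Rightarrow> real^'a) \<Rightarrow> (nat \<Rightarrow> real^'a)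
     \<Rightarrow> real^'a \<Rightarrow> real^'a \<Rightarrow> real^'a \<Rightarrow> real" where
  "zeta H \<nu> \<eta> m \<delta> xbt xbk xbk1 x =
     2 / (real m * (real m + 1)) *
       ( 1 / \<eta> * (qn H (x - xbk1) - qn H (x - xbk))
         - (\<Sum>t = 1..m. real t * (\<delta> t \<bullet> (xbt t - x)))
         - \<eta> / (4 * (1 - \<eta> * \<nu>)) * (\<Sum>t = 1..m. (real t)^2 * qn (matrix_inv H) (\<delta> t)))"

end

theory Submission
  imports Defs
begin

(* Write E_t for the gap of the linearized x-subproblem objective at the t-th inner iterate.
   One inner step combines convexity of f at the extrapolated point, the descent lemma for the
   H-Lipschitz gradient and the first-order optimality of the proximal step; the gradient error
   delta_t is absorbed by Young's inequality, which is where eta < 1/nu enters.  This gives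
   E_(t+1) <= (1 - beta_t) E_t + beta_t (...), and multiplying by t(t+1)/2 telescopes the
   recursion into E_(m+1) <= -zeta^k(x).  The first-order optimality of the y-update, obtained
   by comparing with points on the segment towards y and using convexity of g, and the two
   multiplier updates then turn this into the claimed inequality by linear algebra. *)

lemma inner_matrix_transpose: "(u::real^'n) \<bullet> (A *v v) = (transpose A *v u) \<bullet> (v::real^'m)"
  by (metis dot_lmul_matrix inner_commute transpose_matrix_vector)

lemma matrix_vector_mult_uminus_right: "A *v (- v) = - (A *v (v::real^'n))"
  by (metis matrix_vector_mult_diff_distrib diff_0 matrix_vector_mult_0_right)

lemma sym_mat_inner_commute: "sym_mat S \<Longrightarrow> (u::real^'n) \<bullet> (S *v v) = v \<bullet> (S *v u)"
  unfolding sym_mat_def by (metis inner_matrix_transpose inner_commute)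

lemma qn_add: "sym_mat S \<Longrightarrow> qn S (u + v) = qn S u + 2 * (u \<bullet> (S *v v)) + qn S v"
  unfolding qn_def using sym_mat_inner_commute[of S u v]
  by (simp add: algebra_simps inner_add_left inner_add_right)

lemma qn_scaleR: "qn S (c *\<^sub>R u) = c\<^sup>2 * qn S u"
  unfolding qn_def by (simp add: algebra_simps power2_eq_square)

lemma qn_diff: "sym_mat S \<Longrightarrow> qn S (u - v) = qn S u - 2 * (u \<bullet> (S *v v)) + qn S v"
  using qn_add[of S u "- v"] qn_scaleR[of S "- 1" v]
  by (simp add: algebra_simps matrix_vector_mult_uminus_right)

lemma qn_three_point:
  assumes "sym_mat H"
  shows "(H *v (q - p)) \<bullet> (z - q) = (qn H (z - p) - qn H (z - q) - qn H (q - p)) / 2"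
proof -
  have "qn H (z - p) = qn H ((z - q) + (q - p))" by simp
  also have "\<dots> = qn H (z - q) + 2 * ((z - q) \<bullet> (H *v (q - p))) + qn H (q - p)"
    by (rule qn_add[OF assms])
  finally show ?thesis by (simp add: inner_commute)
qed

lemma pd_mat_qn_nonneg: "pd_mat H \<Longrightarrow> 0 \<le> qn H v"
  unfolding pd_mat_def by (metis order.order_iff_strict qn_def inner_zero_left)

lemma qn_nonneg_of_psd_minus_gram:
  assumes "psd_mat (M - \<beta> *\<^sub>R (transpose A ** A))" and "0 \<le> \<beta>"
  shows "0 \<le> qn M v"
proof -
  have "qn (M - \<beta> *\<^sub>R (transpose A ** A)) v = qn M v - \<beta> * ((A *v v) \<bullet> (A *v v))"
    unfolding qn_def
    by (simp add: matrix_vector_mult_diff_rdistrib inner_diff_right scaleR_matrix_vector_assoc[symmetric]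
        matrix_vector_mul_assoc[symmetric] inner_matrix_transpose del: transpose_matrix_vector)
  moreover have "0 \<le> qn (M - \<beta> *\<^sub>R (transpose A ** A)) v"
    using assms(1) unfolding psd_mat_def by blast
  moreover have "0 \<le> \<beta> * ((A *v v) \<bullet> (A *v v))" using assms(2) by simp
  ultimately show ?thesis by linarith
qed

lemma pd_mat_invertible:
  assumes "pd_mat (H::real^'n^'n)" shows "invertible H"
proof -
  have "\<forall>x. H *v x = 0 \<longrightarrow> x = 0"
    using assms unfolding pd_mat_def qn_def by (metis inner_zero_right less_irrefl)
  then show ?thesis
    using invertible_left_inverse matrix_left_invertible_ker by blast
qed

lemma pd_mat_matrix_inv_right:
  assumes "pd_mat (H::real^'n^'n)" shows "H *v (matrix_inv H *v w) = w"
proof -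
  have "H ** matrix_inv H = mat 1"
    using pd_mat_invertible[OF assms] unfolding invertible_def matrix_inv_def
    by (metis (mono_tags, lifting) someI_ex)
  then show ?thesis by (simp add: matrix_vector_mul_assoc)
qed

lemma qn_matrix_inv: "pd_mat (H::real^'n^'n) \<Longrightarrow> qn (matrix_inv H) w = qn H (matrix_inv H *v w)"
  unfolding qn_def by (simp add: pd_mat_matrix_inv_right inner_commute)

lemma qn_matrix_inv_nonneg: "pd_mat (H::real^'n^'n) \<Longrightarrow> 0 \<le> qn (matrix_inv H) w"
  by (simp add: qn_matrix_inv pd_mat_qn_nonneg)

lemma young_qn:
  assumes H: "pd_mat (H::real^'n^'n)" and c: "c > 0"
  shows "w \<bullet> u \<le> qn (matrix_inv H) w / (4 * c) + c * qn H u"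
proof -
  have sH: "sym_mat H" using H pd_mat_def by blast
  let ?z = "matrix_inv H *v w"
  have "0 \<le> qn H ((2 * c) *\<^sub>R u - ?z)" by (rule pd_mat_qn_nonneg[OF H])
  also have "\<dots> = 4 * c\<^sup>2 * qn H u - 4 * c * (w \<bullet> u) + qn (matrix_inv H) w"
    using qn_diff[OF sH, of "(2 * c) *\<^sub>R u" ?z] qn_scaleR[of H "2 * c" u] qn_matrix_inv[OF H, of w]
    by (simp add: pd_mat_matrix_inv_right[OF H] power2_eq_square inner_commute algebra_simps)
  finally have "4 * c * (w \<bullet> u) \<le> 4 * c\<^sup>2 * qn H u + qn (matrix_inv H) w" by simp
  then show ?thesis using c by (simp add: field_simps power2_eq_square)
qed

lemma cauchy_schwarz_qn:
  assumes H: "pd_mat (H::real^'n^'n)"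
  shows "w \<bullet> u \<le> sqrt (qn (matrix_inv H) w) * sqrt (qn H u)"
proof -
  let ?P = "qn (matrix_inv H) w" and ?Q = "qn H u"
  have P0: "?P \<ge> 0" by (rule qn_matrix_inv_nonneg[OF H])
  have Q0: "?Q \<ge> 0" by (rule pd_mat_qn_nonneg[OF H])
  consider "?P = 0" | "?Q = 0" | "?P > 0" "?Q > 0" using P0 Q0 by linarith
  then show ?thesis
  proof cases
    case 1
    then have "matrix_inv H *v w = 0"
      using qn_matrix_inv[OF H, of w] H unfolding pd_mat_def by (metis less_irrefl)
    then have "w = 0" by (metis pd_mat_matrix_inv_right[OF H] matrix_vector_mult_0_right)
    then show ?thesis using 1 by simp
  next
    case 2
    then have "u = 0" using H unfolding pd_mat_def by (metis less_irrefl)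
    then show ?thesis using 2 by simp
  next
    case 3
    define c where "c = sqrt ?P / (2 * sqrt ?Q)"
    have c: "c > 0" using 3 by (simp add: c_def)
    have sP: "sqrt ?P * sqrt ?P = ?P" and sQ: "sqrt ?Q * sqrt ?Q = ?Q" using P0 Q0 by simp_all
    have "w \<bullet> u \<le> ?P / (4 * c) + c * ?Q" by (rule young_qn[OF H c])
    also have "?P / (4 * c) = sqrt ?P * sqrt ?Q / 2"
      using 3 sP sQ by (simp add: c_def field_simps)
    also have "c * ?Q = sqrt ?P * sqrt ?Q / 2"
      using 3 sP sQ by (simp add: c_def field_simps)
    finally show ?thesis by (simp add: mult.commute)
  qed
qed

text \<open>The dual form of \<open>\<parallel>G z\<^sub>1 - G z\<^sub>2\<parallel>\<^bsub>H\<^sup>-\<^sup>1\<^esub> \<le> \<nu> \<parallel>z\<^sub>1 - z\<^sub>2\<parallel>\<^bsub>H\<^esub>\<close>;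
  being linear in \<open>G\<close>, it passes to averages of gradients.\<close>
definition grad_lipschitz_on :: "real^'n^'n \<Rightarrow> real \<Rightarrow> (real^'n) set \<Rightarrow> (real^'n \<Rightarrow> real^'n) \<Rightarrow> bool" where
  "grad_lipschitz_on H \<nu> X G \<longleftrightarrow>
     (\<forall>z1\<in>X. \<forall>z2\<in>X. \<forall>u. (G z1 - G z2) \<bullet> u \<le> \<nu> * sqrt (qn H (z1 - z2)) * sqrt (qn H u))"

lemma grad_lipschitz_onI:
  assumes H: "pd_mat H"
    and lip: "\<forall>z1\<in>X. \<forall>z2\<in>X. sqrt (qn (matrix_inv H) (G z1 - G z2)) \<le> \<nu> * sqrt (qn H (z1 - z2))"
  shows "grad_lipschitz_on H \<nu> X G"
  unfolding grad_lipschitz_on_def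
proof (intro ballI allI)
  fix z1 z2 u assume z: "z1 \<in> X" "z2 \<in> X"
  have "(G z1 - G z2) \<bullet> u \<le> sqrt (qn (matrix_inv H) (G z1 - G z2)) * sqrt (qn H u)"
    by (rule cauchy_schwarz_qn[OF H])
  also have "\<dots> \<le> \<nu> * sqrt (qn H (z1 - z2)) * sqrt (qn H u)"
    using lip z pd_mat_qn_nonneg[OF H] by (intro mult_right_mono) auto
  finally show "(G z1 - G z2) \<bullet> u \<le> \<nu> * sqrt (qn H (z1 - z2)) * sqrt (qn H u)" .
qed

lemma grad_lipschitz_on_average:
  assumes N: "N \<ge> 1" and lip: "\<forall>j\<in>{1..N}. grad_lipschitz_on H \<nu> X (G j)"
  shows "grad_lipschitz_on H \<nu> X (\<lambda>z. (1 / real N) *\<^sub>R (\<Sum>j = 1..N. G j z))"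
  unfolding grad_lipschitz_on_def
proof (intro ballI allI)
  fix z1 z2 u assume z: "z1 \<in> X" "z2 \<in> X"
  let ?bound = "\<nu> * sqrt (qn H (z1 - z2)) * sqrt (qn H u)"
  have "(\<Sum>j = 1..N. (G j z1 - G j z2) \<bullet> u) \<le> (\<Sum>j = 1..N. ?bound)"
    using lip z unfolding grad_lipschitz_on_def by (intro sum_mono) blast
  then have "(1 / real N) * (\<Sum>j = 1..N. (G j z1 - G j z2) \<bullet> u) \<le> ?bound"
    using N by (simp add: field_simps)
  then show "((1 / real N) *\<^sub>R (\<Sum>j = 1..N. G j z1) - (1 / real N) *\<^sub>R (\<Sum>j = 1..N. G j z2)) \<bullet> u \<le> ?bound"
    by (simp add: inner_diff_left inner_sum_left sum_subtractf right_diff_distrib)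
qed

lemma has_derivative_average:
  assumes f_def: "f = (\<lambda>z. (1 / real N) * (\<Sum>j = 1..N. F j z))"
    and gf_def: "gf = (\<lambda>z. (1 / real N) *\<^sub>R (\<Sum>j = 1..N. G j z))"
    and deriv: "\<forall>j\<in>{1..N}. (F j has_derivative (\<lambda>v. G j z \<bullet> v)) (at z)"
  shows "(f has_derivative (\<lambda>v. gf z \<bullet> v)) (at z)"
proof -
  have "((\<lambda>z. \<Sum>j = 1..N. F j z) has_derivative (\<lambda>v. \<Sum>j = 1..N. G j z \<bullet> v)) (at z)"
    using deriv by (intro has_derivative_sum) auto
  then have "(f has_derivative (\<lambda>v. (1 / real N) * (\<Sum>j = 1..N. G j z \<bullet> v))) (at z)"
    unfolding f_def by (rule has_derivative_mult_right)
  then show ?thesis by (simp add: gf_def inner_sum_left)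
qed

lemma gradient_inequality_average:
  assumes f_def: "f = (\<lambda>z. (1 / real N) * (\<Sum>j = 1..N. F j z))"
    and gf_def: "gf = (\<lambda>z. (1 / real N) *\<^sub>R (\<Sum>j = 1..N. G j z))"
    and grad: "\<forall>j\<in>{1..N}. F j a + G j a \<bullet> (w - a) \<le> F j w"
  shows "f a + gf a \<bullet> (w - a) \<le> f w"
proof -
  have "(\<Sum>j = 1..N. F j a + G j a \<bullet> (w - a)) \<le> (\<Sum>j = 1..N. F j w)"
    using grad by (intro sum_mono) auto
  then have "(1 / real N) * (\<Sum>j = 1..N. F j a + G j a \<bullet> (w - a)) \<le> (1 / real N) * (\<Sum>j = 1..N. F j w)"
    by (intro mult_left_mono) auto
  then show ?thesis
    unfolding f_def gf_def by (simp add: sum.distrib distrib_left inner_sum_left)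
qed

lemma has_field_derivative_along_line:
  fixes F :: "real^'n \<Rightarrow> real"
  assumes "(F has_derivative (\<lambda>v. G \<bullet> v)) (at (a + s *\<^sub>R u))"
  shows "((\<lambda>s. F (a + s *\<^sub>R u)) has_field_derivative (G \<bullet> u)) (at s)"
proof -
  have "((\<lambda>s. a + s *\<^sub>R u) has_derivative (\<lambda>s. s *\<^sub>R u)) (at s)"
    by (auto intro!: derivative_eq_intros)
  from has_derivative_compose[OF this assms]
  have "((\<lambda>s. F (a + s *\<^sub>R u)) has_derivative (\<lambda>s. G \<bullet> (s *\<^sub>R u))) (at s)" by simp
  then show ?thesis
    by (rule has_derivative_imp_has_field_derivative) simp
qed

lemma convex_on_gradient_inequality:
  fixes F :: "real^'n \<Rightarrow> real"
  assumes cv: "convex_on UNIV F" and d: "(F has_derivative (\<lambda>v. G \<bullet> v)) (at a)"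
  shows "F a + G \<bullet> (w - a) \<le> F w"
proof -
  let ?u = "w - a"
  let ?phi = "\<lambda>s. F (a + s *\<^sub>R ?u)"
  have cphi: "convex_on UNIV ?phi"
  proof (rule convex_onI)
    fix t x y :: real assume t: "t > 0" "t < 1"
    have "a + ((1 - t) *\<^sub>R x + t *\<^sub>R y) *\<^sub>R ?u = (1 - t) *\<^sub>R (a + x *\<^sub>R ?u) + t *\<^sub>R (a + y *\<^sub>R ?u)"
      by (simp add: algebra_simps)
    then show "?phi ((1 - t) *\<^sub>R x + t *\<^sub>R y) \<le> (1 - t) * ?phi x + t * ?phi y"
      using convex_onD[OF cv, of t] t by auto
  qed simp
  have "(?phi has_field_derivative (G \<bullet> ?u)) (at 0 within UNIV)"
    using has_field_derivative_along_line[of F G a 0 ?u] d by simp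
  then have "?phi 1 - ?phi 0 \<ge> (G \<bullet> ?u) * (1 - 0)"
    by (intro convex_on_imp_above_tangent[OF cphi]) auto
  then show ?thesis by simp
qed

lemma descent_lemma:
  fixes F :: "real^'n \<Rightarrow> real" and GF :: "real^'n \<Rightarrow> real^'n"
  assumes cX: "convex X" and a: "a \<in> X" and b: "b \<in> X" and H: "pd_mat H" and nu: "\<nu> \<ge> 0"
    and d: "\<forall>z\<in>X. (F has_derivative (\<lambda>v. GF z \<bullet> v)) (at z)"
    and lip: "grad_lipschitz_on H \<nu> X GF"
  shows "F b \<le> F a + GF a \<bullet> (b - a) + \<nu> / 2 * qn H (b - a)"
proof -
  let ?u = "b - a"
  let ?Q = "qn H ?u"
  have Q0: "?Q \<ge> 0" by (rule pd_mat_qn_nonneg[OF H])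
  let ?phi = "\<lambda>s. F (a + s *\<^sub>R ?u) - s * (GF a \<bullet> ?u) - \<nu> * s\<^sup>2 / 2 * ?Q"
  have inX: "a + s *\<^sub>R ?u \<in> X" if "0 \<le> s" "s \<le> 1" for s
  proof -
    have "a + s *\<^sub>R ?u = (1 - s) *\<^sub>R a + s *\<^sub>R b" by (simp add: algebra_simps)
    then show ?thesis using convexD[OF cX a b, of "1 - s" s] that by simp
  qed
  have "?phi 1 \<le> ?phi 0"
  proof (rule DERIV_nonpos_imp_nonincreasing[of 0 1 ?phi])
    fix s :: real assume s: "0 \<le> s" "s \<le> 1"
    have "((\<lambda>s. F (a + s *\<^sub>R ?u)) has_field_derivative (GF (a + s *\<^sub>R ?u) \<bullet> ?u)) (at s)"
      by (rule has_field_derivative_along_line) (use d inX[OF s] in auto)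
    then have D: "(?phi has_field_derivative (GF (a + s *\<^sub>R ?u) \<bullet> ?u - GF a \<bullet> ?u - \<nu> * s * ?Q)) (at s)"
      by (auto intro!: derivative_eq_intros simp: power2_eq_square)
    have "(GF (a + s *\<^sub>R ?u) - GF a) \<bullet> ?u \<le> \<nu> * sqrt (qn H (a + s *\<^sub>R ?u - a)) * sqrt ?Q"
      using lip inX[OF s] a unfolding grad_lipschitz_on_def by blast
    also have "sqrt (qn H (a + s *\<^sub>R ?u - a)) = s * sqrt ?Q"
      using s by (simp add: qn_scaleR real_sqrt_mult)
    also have "\<nu> * (s * sqrt ?Q) * sqrt ?Q = \<nu> * s * ?Q"
      using Q0 by (simp add: mult.assoc)
    finally have "GF (a + s *\<^sub>R ?u) \<bullet> ?u - GF a \<bullet> ?u - \<nu> * s * ?Q \<le> 0"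
      by (simp add: inner_diff_left)
    then show "\<exists>y. (?phi has_real_derivative y) (at s) \<and> y \<le> 0" using D by blast
  qed simp
  then show ?thesis by (simp add: algebra_simps)
qed

lemma average_of_smooth_convex:
  assumes N: "N \<ge> 1" and H: "pd_mat H"
    and f_def: "f = (\<lambda>z. (1 / real N) * (\<Sum>j = 1..N. F j z))"
    and gf_def: "gf = (\<lambda>z. (1 / real N) *\<^sub>R (\<Sum>j = 1..N. G j z))"
    and convex: "\<forall>j\<in>{1..N}. convex_on UNIV (F j)"
    and deriv: "\<forall>j\<in>{1..N}. \<forall>z\<in>X. (F j has_derivative (\<lambda>v. G j z \<bullet> v)) (at z)"
    and lip: "\<forall>j\<in>{1..N}. \<forall>z1\<in>X. \<forall>z2\<in>X.
        sqrt (qn (matrix_inv H) (G j z1 - G j z2)) \<le> \<nu> * sqrt (qn H (z1 - z2))"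
  shows "\<forall>z\<in>X. (f has_derivative (\<lambda>v. gf z \<bullet> v)) (at z)"
    and "\<forall>a\<in>X. \<forall>w. f a + gf a \<bullet> (w - a) \<le> f w"
    and "grad_lipschitz_on H \<nu> X gf"
  using has_derivative_average[OF f_def gf_def] deriv apply blast
  using gradient_inequality_average[OF f_def gf_def] convex_on_gradient_inequality convex deriv apply blast
  unfolding gf_def using grad_lipschitz_on_average[OF N] grad_lipschitz_onI[OF H] lip by blast

lemma nonneg_of_small_perturbations:
  fixes K C :: real
  assumes "\<forall>e. 0 < e \<and> e \<le> 1 \<longrightarrow> 0 \<le> e * K + e\<^sup>2 * C"
  shows "0 \<le> K"
proof (rule ccontr)
  assume K: "\<not> 0 \<le> K"
  show False
  proof (cases "C \<le> 0")
    case True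
    then show ?thesis using assms[rule_format, of 1] K by simp
  next
    case False
    define e where "e = min 1 (- K / (2 * C))"
    have "- K / (2 * C) > 0" using K False by (intro divide_pos_pos) auto
    then have e: "0 < e" "e \<le> 1" by (auto simp: e_def)
    have "e \<le> - K / (2 * C)" by (simp add: e_def)
    then have "e * C \<le> - K / 2" using False by (simp add: field_simps)
    then have "e * (K + e * C) < 0" using K e by (simp add: mult_pos_neg)
    then show False using assms[rule_format, of e] e by (simp add: power2_eq_square algebra_simps)
  qed
qed

lemma prox_step_optimality:
  fixes q z p xo c :: "real^'n"
  assumes cX: "convex X" and q: "q \<in> X" and z: "z \<in> X" and sH: "sym_mat H" and sM: "sym_mat M"
    and min: "\<forall>w\<in>X. c \<bullet> q + \<gamma> / 2 * qn H (q - p) + 1 / 2 * qn M (q - xo)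
                \<le> c \<bullet> w + \<gamma> / 2 * qn H (w - p) + 1 / 2 * qn M (w - xo)"
  shows "0 \<le> (c + \<gamma> *\<^sub>R (H *v (q - p)) + M *v (q - xo)) \<bullet> (z - q)"
proof -
  let ?u = "z - q"
  let ?K = "(c + \<gamma> *\<^sub>R (H *v (q - p)) + M *v (q - xo)) \<bullet> ?u"
  let ?C = "\<gamma> / 2 * qn H ?u + 1 / 2 * qn M ?u"
  have "0 \<le> e * ?K + e\<^sup>2 * ?C" if e: "0 < e" "e \<le> 1" for e
  proof -
    have "q + e *\<^sub>R ?u = (1 - e) *\<^sub>R q + e *\<^sub>R z" by (simp add: algebra_simps)
    then have w: "q + e *\<^sub>R ?u \<in> X" using convexD[OF cX q z, of "1 - e" e] e by simp
    have eH: "qn H (q + e *\<^sub>R ?u - p) = qn H (q - p) + 2 * e * ((q - p) \<bullet> (H *v ?u)) + e\<^sup>2 * qn H ?u"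
      using qn_add[OF sH, of "q - p" "e *\<^sub>R ?u"] qn_scaleR[of H e ?u]
      by (simp add: matrix_vector_mult_scaleR diff_add_eq[symmetric] add.commute)
    have eM: "qn M (q + e *\<^sub>R ?u - xo) = qn M (q - xo) + 2 * e * ((q - xo) \<bullet> (M *v ?u)) + e\<^sup>2 * qn M ?u"
      using qn_add[OF sM, of "q - xo" "e *\<^sub>R ?u"] qn_scaleR[of M e ?u]
      by (simp add: matrix_vector_mult_scaleR diff_add_eq[symmetric] add.commute)
    have "(H *v (q - p)) \<bullet> ?u = (q - p) \<bullet> (H *v ?u)" "(M *v (q - xo)) \<bullet> ?u = (q - xo) \<bullet> (M *v ?u)"
      using sym_mat_inner_commute[OF sH, of ?u "q - p"] sym_mat_inner_commute[OF sM, of ?u "q - xo"]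
      by (simp_all add: inner_commute)
    then have K: "?K = c \<bullet> ?u + \<gamma> * ((q - p) \<bullet> (H *v ?u)) + (q - xo) \<bullet> (M *v ?u)"
      by (simp only: inner_add_left inner_scaleR_left)
    have "0 \<le> (c \<bullet> (q + e *\<^sub>R ?u) + \<gamma> / 2 * qn H (q + e *\<^sub>R ?u - p) + 1 / 2 * qn M (q + e *\<^sub>R ?u - xo))
        - (c \<bullet> q + \<gamma> / 2 * qn H (q - p) + 1 / 2 * qn M (q - xo))"
      using min w by auto
    also have "\<dots> = e * ?K + e\<^sup>2 * ?C"
      unfolding eH eM K by (simp add: inner_add_right algebra_simps)
    finally show ?thesis .
  qed
  then show ?thesis by (intro nonneg_of_small_perturbations) auto
qed

lemma aug_lag_argmin_finite:
  assumes g: "proper_convex_on Y g" and yp: "yp \<in> Y"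
    and min: "\<forall>z\<in>Y. aug_lag f g A B b \<beta> x1 yp lh + ereal (1 / 2 * qn L (yp - y0))
                \<le> aug_lag f g A B b \<beta> x1 z lh + ereal (1 / 2 * qn L (z - y0))"
  shows "\<exists>r. g yp = ereal r"
proof -
  obtain z0 where z0: "z0 \<in> Y" "g z0 \<noteq> \<infinity>" "g z0 \<noteq> -\<infinity>"
    using g unfolding proper_convex_on_def by blast
  have "g yp \<noteq> \<infinity>"
  proof
    assume "g yp = \<infinity>"
    moreover have "aug_lag f g A B b \<beta> x1 yp lh + ereal (1 / 2 * qn L (yp - y0))
                \<le> aug_lag f g A B b \<beta> x1 z0 lh + ereal (1 / 2 * qn L (z0 - y0))"
      using min z0 by blast
    ultimately show False using z0 unfolding aug_lag_def by (cases "g z0") auto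
  qed
  moreover have "g yp \<noteq> -\<infinity>" using g yp unfolding proper_convex_on_def by blast
  ultimately show ?thesis by (cases "g yp") auto
qed

lemma aug_lag_step_optimality:
  fixes yp yy y0 :: "real^'b" and x1 :: "real^'a" and lh b :: "real^'c"
  assumes cY: "convex Y" and yp: "yp \<in> Y" and yy: "yy \<in> Y" and sL: "sym_mat L"
    and g: "proper_convex_on Y g" and g1: "g yp = ereal r1" and g0: "g yy = ereal r0"
    and min: "\<forall>z\<in>Y. aug_lag f g A B b \<beta> x1 yp lh + ereal (1 / 2 * qn L (yp - y0))
                \<le> aug_lag f g A B b \<beta> x1 z lh + ereal (1 / 2 * qn L (z - y0))"
  shows "0 \<le> r0 - r1 - lh \<bullet> (B *v (yy - yp)) + \<beta> * ((A *v x1 + B *v yp - b) \<bullet> (B *v (yy - yp)))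
             + (yy - yp) \<bullet> (L *v (yp - y0))"
proof -
  let ?u = "yy - yp"
  let ?r = "A *v x1 + B *v yp - b"
  let ?K = "r0 - r1 - lh \<bullet> (B *v ?u) + \<beta> * (?r \<bullet> (B *v ?u)) + ?u \<bullet> (L *v (yp - y0))"
  let ?C = "\<beta> / 2 * ((B *v ?u) \<bullet> (B *v ?u)) + 1 / 2 * qn L ?u"
  have "0 \<le> e * ?K + e\<^sup>2 * ?C" if e: "0 < e" "e \<le> 1" for e
  proof -
    define w where "w = yp + e *\<^sub>R ?u"
    have wc: "w = (1 - e) *\<^sub>R yp + e *\<^sub>R yy" by (simp add: w_def algebra_simps)
    have w: "w \<in> Y" using convexD[OF cY yp yy, of "1 - e" e] e wc by simp
    have "g w \<le> ereal (1 - e) * g yp + ereal e * g yy"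
      using g yp yy e unfolding proper_convex_on_def convex_ereal_on_def wc by auto
    then have gw: "g w \<le> ereal ((1 - e) * r1 + e * r0)" by (simp add: g1 g0)
    obtain rw where rw: "g w = ereal rw" using gw g w unfolding proper_convex_on_def
      by (cases "g w") auto
    have "aug_lag f g A B b \<beta> x1 yp lh + ereal (1 / 2 * qn L (yp - y0))
                \<le> aug_lag f g A B b \<beta> x1 w lh + ereal (1 / 2 * qn L (w - y0))"
      using min w by blast
    then have mr: "r1 - lh \<bullet> ?r + \<beta> / 2 * (norm ?r)\<^sup>2 + 1 / 2 * qn L (yp - y0)
        \<le> rw - lh \<bullet> (A *v x1 + B *v w - b) + \<beta> / 2 * (norm (A *v x1 + B *v w - b))\<^sup>2 + 1 / 2 * qn L (w - y0)"
      unfolding aug_lag_def g1 rw by simp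
    have ew: "A *v x1 + B *v w - b = ?r + e *\<^sub>R (B *v ?u)"
      by (simp add: w_def matrix_vector_right_distrib matrix_vector_mult_scaleR algebra_simps)
    have n1: "(norm (A *v x1 + B *v w - b))\<^sup>2 = (norm ?r)\<^sup>2 + 2 * e * (?r \<bullet> (B *v ?u)) + e\<^sup>2 * ((B *v ?u) \<bullet> (B *v ?u))"
      unfolding ew power2_norm_eq_inner
      by (simp add: inner_add_left inner_add_right inner_commute algebra_simps power2_eq_square)
    have n2: "qn L (w - y0) = qn L (yp - y0) + 2 * e * (?u \<bullet> (L *v (yp - y0))) + e\<^sup>2 * qn L ?u"
      using qn_add[OF sL, of "yp - y0" "e *\<^sub>R ?u"] qn_scaleR[of L e ?u] sym_mat_inner_commute[OF sL, of "yp - y0" ?u]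
      by (simp add: w_def matrix_vector_mult_scaleR diff_add_eq[symmetric] add.commute)
    have n3: "lh \<bullet> (A *v x1 + B *v w - b) = lh \<bullet> ?r + e * (lh \<bullet> (B *v ?u))"
      unfolding ew by (simp add: inner_add_right)
    have "0 \<le> (rw - r1) + (e * (- (lh \<bullet> (B *v ?u))) + \<beta> / 2 * (2 * e * (?r \<bullet> (B *v ?u)) + e\<^sup>2 * ((B *v ?u) \<bullet> (B *v ?u))))
           + 1 / 2 * (2 * e * (?u \<bullet> (L *v (yp - y0))) + e\<^sup>2 * qn L ?u)"
      using mr unfolding n1 n2 n3 by (simp add: algebra_simps)
    also have "\<dots> \<le> e * ?K + e\<^sup>2 * ?C"
      using gw rw by (simp add: algebra_simps)
    finally show ?thesis .
  qed
  then show ?thesis by (intro nonneg_of_small_perturbations) auto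
qed

lemma accelerated_convex_estimate:
  fixes a p q z g :: "real^'n"
  assumes b: "0 \<le> b" "b \<le> 1"
    and xh: "xh = b *\<^sub>R p + (1 - b) *\<^sub>R a" and a1: "a1 = b *\<^sub>R q + (1 - b) *\<^sub>R a"
    and desc: "f a1 \<le> f xh + g \<bullet> (a1 - xh) + \<nu> / 2 * qn H (a1 - xh)"
    and grad_a: "f xh + g \<bullet> (a - xh) \<le> f a" and grad_z: "f xh + g \<bullet> (z - xh) \<le> f z"
  shows "f a1 - f z \<le> (1 - b) * (f a - f z) + b * (g \<bullet> (q - z)) + \<nu> * b\<^sup>2 / 2 * qn H (q - p)"
proof -
  have d1: "a1 - xh = b *\<^sub>R (q - p)" by (simp add: xh a1 algebra_simps)
  have d2: "g \<bullet> (a1 - xh) = (1 - b) * (g \<bullet> (a - xh)) + b * (g \<bullet> (z - xh)) + b * (g \<bullet> (q - z))"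
    by (simp add: a1 inner_diff_right inner_add_right algebra_simps)
  have "f a1 \<le> (1 - b) * (f xh + g \<bullet> (a - xh)) + b * (f xh + g \<bullet> (z - xh)) + b * (g \<bullet> (q - z))
                 + \<nu> / 2 * (b\<^sup>2 * qn H (q - p))"
    using desc unfolding d1 qn_scaleR using d2 d1 by (simp add: algebra_simps)
  moreover have "(1 - b) * (f xh + g \<bullet> (a - xh)) \<le> (1 - b) * f a" using grad_a b by (intro mult_left_mono) auto
  moreover have "b * (f xh + g \<bullet> (z - xh)) \<le> b * f z" using grad_z b by (intro mult_left_mono) auto
  ultimately show ?thesis by (simp add: algebra_simps)
qed

text \<open>\<open>xsub_gap f h M xo z w\<close> is the difference at \<open>w\<close> and \<open>z\<close> of the objective
  \<open>f w + h \<bullet> w + \<parallel>w - xo\<parallel>\<^sup>2\<^bsub>M\<^esub> / 2\<close> of the x-subproblem, plus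
  \<open>\<parallel>w - z\<parallel>\<^sup>2\<^bsub>M\<^esub> / 2\<close>.\<close>
definition xsub_gap :: "(real^'n \<Rightarrow> real) \<Rightarrow> real^'n \<Rightarrow> real^'n^'n \<Rightarrow> real^'n \<Rightarrow> real^'n \<Rightarrow> real^'n \<Rightarrow> real" where
  "xsub_gap f h M xo z w = f w - f z + h \<bullet> (w - z) + (w - z) \<bullet> (M *v (w - xo))"

lemma linear_quadratic_convex_combination:
  assumes sM: "sym_mat M"
  shows "h \<bullet> (((1 - b) *\<^sub>R a + b *\<^sub>R q) - z) + (((1 - b) *\<^sub>R a + b *\<^sub>R q) - z) \<bullet> (M *v (((1 - b) *\<^sub>R a + b *\<^sub>R q) - xo))
   = (1 - b) * (h \<bullet> (a - z) + (a - z) \<bullet> (M *v (a - xo))) + b * (h \<bullet> (q - z) + (q - z) \<bullet> (M *v (q - xo)))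
     - b * (1 - b) * qn M (a - q)"
proof -
  define u where "u = a - z"
  define v where "v = q - z"
  define r where "r = z - xo"
  have "((1 - b) *\<^sub>R a + b *\<^sub>R q) - z = (1 - b) *\<^sub>R u + b *\<^sub>R v"
    "((1 - b) *\<^sub>R a + b *\<^sub>R q) - xo = ((1 - b) *\<^sub>R u + b *\<^sub>R v) + r"
    "a - xo = u + r" "q - xo = v + r" "a - q = u - v" "a - z = u" "q - z = v"
    by (auto simp: u_def v_def r_def algebra_simps)
  moreover have "v \<bullet> (M *v u) = u \<bullet> (M *v v)" by (rule sym_mat_inner_commute[OF sM])
  ultimately show ?thesis unfolding qn_def
    by (simp add: algebra_simps inner_add_left inner_add_right inner_diff_left inner_diff_right power2_eq_square)
qed

lemma accelerated_step_estimate: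
  fixes a p q z xo g d h :: "real^'n"
  assumes H: "pd_mat H" and sM: "sym_mat M" and M_nonneg: "\<forall>v. 0 \<le> qn M v"
    and b: "0 < b" "b \<le> 1" and gam: "\<gamma> - \<nu> * b > 0"
    and xh: "xh = b *\<^sub>R p + (1 - b) *\<^sub>R a" and a1: "a1 = b *\<^sub>R q + (1 - b) *\<^sub>R a"
    and desc: "f a1 \<le> f xh + g \<bullet> (a1 - xh) + \<nu> / 2 * qn H (a1 - xh)"
    and grad_a: "f xh + g \<bullet> (a - xh) \<le> f a" and grad_z: "f xh + g \<bullet> (z - xh) \<le> f z"
    and opt: "0 \<le> (d + h + \<gamma> *\<^sub>R (H *v (q - p)) + M *v (q - xo)) \<bullet> (z - q)"
  shows "xsub_gap f h M xo z a1 \<le> (1 - b) * xsub_gap f h M xo z a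
     + b * ((g - d) \<bullet> (p - z) + \<gamma> / 2 * (qn H (z - p) - qn H (z - q))
            + qn (matrix_inv H) (g - d) / (2 * (\<gamma> - \<nu> * b)))"
proof -
  let ?lin = "\<lambda>w. h \<bullet> (w - z) + (w - z) \<bullet> (M *v (w - xo))"
  have f_part: "f a1 - f z \<le> (1 - b) * (f a - f z) + b * (g \<bullet> (q - z)) + \<nu> * b\<^sup>2 / 2 * qn H (q - p)"
    using accelerated_convex_estimate[OF _ b(2) xh a1 desc grad_a grad_z] b by simp
  have "?lin a1 = (1 - b) * ?lin a + b * ?lin q - b * (1 - b) * qn M (a - q)"
    using linear_quadratic_convex_combination[OF sM] a1 by (simp add: add.commute)
  then have lin_part: "?lin a1 \<le> (1 - b) * ?lin a + b * ?lin q"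
    using M_nonneg b by (simp add: mult_nonneg_nonneg)
  have opt_part: "d \<bullet> (q - z) + ?lin q \<le> \<gamma> / 2 * (qn H (z - p) - qn H (z - q) - qn H (q - p))"
  proof -
    have "0 \<le> d \<bullet> (z - q) + h \<bullet> (z - q) + \<gamma> * ((H *v (q - p)) \<bullet> (z - q)) + (M *v (q - xo)) \<bullet> (z - q)"
      using opt by (simp add: inner_add_left)
    moreover have "(H *v (q - p)) \<bullet> (z - q) = (qn H (z - p) - qn H (z - q) - qn H (q - p)) / 2"
      using H unfolding pd_mat_def by (blast intro: qn_three_point)
    moreover have "d \<bullet> (z - q) = - (d \<bullet> (q - z))" "h \<bullet> (z - q) = - (h \<bullet> (q - z))"
      "(M *v (q - xo)) \<bullet> (z - q) = - ((q - z) \<bullet> (M *v (q - xo)))"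
      by (simp_all add: inner_diff_right inner_diff_left inner_commute)
    ultimately show ?thesis by simp
  qed
  define c where "c = (\<gamma> - \<nu> * b) / 2"
  have c: "c > 0" using gam by (simp add: c_def)
  have young: "(g - d) \<bullet> (q - p) \<le> qn (matrix_inv H) (g - d) / (4 * c) + c * qn H (q - p)"
    by (rule young_qn[OF H c])
  have "g \<bullet> (q - z) = (g - d) \<bullet> (p - z) + (g - d) \<bullet> (q - p) + d \<bullet> (q - z)"
    by (simp add: inner_diff_left inner_diff_right algebra_simps)
  then have "xsub_gap f h M xo z a1 \<le> (1 - b) * xsub_gap f h M xo z a
      + b * ((g - d) \<bullet> (p - z) + (g - d) \<bullet> (q - p) + (d \<bullet> (q - z) + ?lin q)) + \<nu> * b\<^sup>2 / 2 * qn H (q - p)"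
    using f_part lin_part unfolding xsub_gap_def by (simp add: algebra_simps)
  also have "\<dots> \<le> (1 - b) * xsub_gap f h M xo z a + b * ((g - d) \<bullet> (p - z)
        + (qn (matrix_inv H) (g - d) / (4 * c) + c * qn H (q - p))
        + \<gamma> / 2 * (qn H (z - p) - qn H (z - q) - qn H (q - p))) + \<nu> * b\<^sup>2 / 2 * qn H (q - p)"
    using mult_left_mono[OF add_mono[OF young opt_part], of b] b by (simp add: algebra_simps)
  also have "\<dots> = (1 - b) * xsub_gap f h M xo z a
     + b * ((g - d) \<bullet> (p - z) + \<gamma> / 2 * (qn H (z - p) - qn H (z - q))
            + qn (matrix_inv H) (g - d) / (2 * (\<gamma> - \<nu> * b)))"
    using c by (simp add: c_def field_simps power2_eq_square)
  finally show ?thesis .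
qed

lemma step_coefficient_bound:
  fixes t :: nat and \<eta> \<nu> :: real
  assumes t: "t \<ge> 1" and eta: "\<eta> > 0" and nu: "\<nu> > 0" and en: "\<eta> * \<nu> < 1"
  shows "2 / (real t * \<eta>) - \<nu> * (2 / (real t + 1)) > 0"
    and "real t / (2 * (2 / (real t * \<eta>) - \<nu> * (2 / (real t + 1)))) \<le> \<eta> / (4 * (1 - \<eta> * \<nu>)) * (real t)\<^sup>2"
proof -
  define X where "X = 2 / (real t * \<eta>) - \<nu> * (2 / (real t + 1))"
  define Y where "Y = 2 * (1 - \<eta> * \<nu>) / (real t * \<eta>)"
  have tp: "real t > 0" using t by simp
  have "\<nu> * (2 / (real t + 1)) \<le> \<nu> * (2 / real t)"
    using tp nu by (intro mult_left_mono divide_left_mono) auto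
  also have "\<nu> * (2 / real t) = 2 * (\<eta> * \<nu>) / (real t * \<eta>)" using eta tp by (simp add: field_simps)
  finally have XY: "Y \<le> X" unfolding X_def Y_def by (simp add: diff_divide_distrib)
  have Y: "Y > 0" using en eta tp by (simp add: Y_def)
  then show "X > 0" using XY by linarith
  have "real t / (2 * X) \<le> real t / (2 * Y)"
    using XY Y tp by (intro frac_le) auto
  also have "\<dots> = \<eta> / (4 * (1 - \<eta> * \<nu>)) * (real t)\<^sup>2"
    using en eta tp by (simp add: Y_def field_simps power2_eq_square)
  finally show "real t / (2 * X) \<le> \<eta> / (4 * (1 - \<eta> * \<nu>)) * (real t)\<^sup>2" .
qed

text \<open>The weight \<open>t (t + 1) / 2\<close> turns the factor \<open>1 - 2 / (t + 1)\<close> into the weight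
  \<open>(t - 1) t / 2\<close> of the previous step, so that the weighted recursion telescopes.\<close>
lemma weighted_step_bound:
  fixes E R Q :: "nat \<Rightarrow> real" and \<eta> \<nu> P :: real
  assumes t: "t \<ge> 1" and eta: "\<eta> > 0" and nu: "\<nu> > 0" and en: "\<eta> * \<nu> < 1" and P: "0 \<le> P"
    and step: "E (t + 1) \<le> (1 - 2 / (real t + 1)) * E t
        + 2 / (real t + 1) * (R t + (2 / (real t * \<eta>)) / 2 * (Q t - Q (t + 1))
           + P / (2 * (2 / (real t * \<eta>) - \<nu> * (2 / (real t + 1)))))"
  shows "real t * (real t + 1) / 2 * E (t + 1) \<le> (real t - 1) * real t / 2 * E t + real t * R t
          + 1 / \<eta> * (Q t - Q (t + 1)) + \<eta> / (4 * (1 - \<eta> * \<nu>)) * (real t)\<^sup>2 * P"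
proof -
  define X where "X = 2 / (real t * \<eta>) - \<nu> * (2 / (real t + 1))"
  define G where "G = real t * (real t + 1) / 2"
  have X: "X > 0" and cb: "real t / (2 * X) \<le> \<eta> / (4 * (1 - \<eta> * \<nu>)) * (real t)\<^sup>2"
    using step_coefficient_bound[OF t eta nu en] unfolding X_def by auto
  have tp: "real t > 0" using t by simp
  have "G * E (t + 1) \<le> G * ((1 - 2 / (real t + 1)) * E t
        + 2 / (real t + 1) * (R t + (2 / (real t * \<eta>)) / 2 * (Q t - Q (t + 1)) + P / (2 * X)))"
    using step unfolding X_def[symmetric] by (intro mult_left_mono) (auto simp: G_def)
  also have "\<dots> = (real t - 1) * real t / 2 * E t + real t * R t + 1 / \<eta> * (Q t - Q (t + 1))
       + real t / (2 * X) * P"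
  proof -
    have r: "\<And>G A E B R C D W :: real.
        G * (A * E + B * (R + C * D + W)) = (G * A) * E + (G * B) * R + ((G * B) * C) * D + (G * B) * W"
      by (simp add: algebra_simps)
    have c1: "G * (1 - 2 / (real t + 1)) = (real t - 1) * real t / 2" by (simp add: G_def field_simps)
    have c2: "G * (2 / (real t + 1)) = real t" by (simp add: G_def field_simps)
    have c3: "real t * ((2 / (real t * \<eta>)) / 2) = 1 / \<eta>" using tp eta by (simp add: field_simps)
    have c4: "real t * (P / (2 * X)) = real t / (2 * X) * P" by simp
    show ?thesis unfolding r c1 c2 c3 c4 ..
  qed
  also have "\<dots> \<le> (real t - 1) * real t / 2 * E t + real t * R t + 1 / \<eta> * (Q t - Q (t + 1))
       + \<eta> / (4 * (1 - \<eta> * \<nu>)) * (real t)\<^sup>2 * P"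
    using cb P by (intro add_left_mono mult_right_mono) auto
  finally show ?thesis unfolding G_def .
qed

lemma weighted_telescoping:
  fixes E R Q P :: "nat \<Rightarrow> real" and \<eta> \<nu> :: real
  assumes eta: "\<eta> > 0" and nu: "\<nu> > 0" and en: "\<eta> * \<nu> < 1" and P: "\<forall>t. 0 \<le> P t"
    and step: "\<forall>t\<in>{1..m}. E (t + 1) \<le> (1 - 2 / (real t + 1)) * E t
        + 2 / (real t + 1) * (R t + (2 / (real t * \<eta>)) / 2 * (Q t - Q (t + 1))
           + P t / (2 * (2 / (real t * \<eta>) - \<nu> * (2 / (real t + 1)))))"
  shows "real m * (real m + 1) / 2 * E (m + 1) \<le> 1 / \<eta> * (Q 1 - Q (m + 1)) + (\<Sum>t = 1..m. real t * R t)
          + \<eta> / (4 * (1 - \<eta> * \<nu>)) * (\<Sum>t = 1..m. (real t)\<^sup>2 * P t)"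
  using step
proof (induction m)
  case 0
  then show ?case by simp
next
  case (Suc n)
  have IH: "real n * (real n + 1) / 2 * E (n + 1) \<le> 1 / \<eta> * (Q 1 - Q (n + 1)) + (\<Sum>t = 1..n. real t * R t)
          + \<eta> / (4 * (1 - \<eta> * \<nu>)) * (\<Sum>t = 1..n. (real t)\<^sup>2 * P t)"
    using Suc by auto
  have "real (Suc n) * (real (Suc n) + 1) / 2 * E (Suc n + 1) \<le> (real (Suc n) - 1) * real (Suc n) / 2 * E (Suc n)
      + real (Suc n) * R (Suc n) + 1 / \<eta> * (Q (Suc n) - Q (Suc n + 1))
      + \<eta> / (4 * (1 - \<eta> * \<nu>)) * (real (Suc n))\<^sup>2 * P (Suc n)"
    using weighted_step_bound[of "Suc n" \<eta> \<nu> "P (Suc n)" E R Q] eta nu en P Suc.prems[rule_format, of "Suc n"]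
    by simp
  with IH show ?case by (simp add: algebra_simps)
qed

lemma zeta_le_of_recursive_bound:
  fixes xin xbin \<delta> :: "nat \<Rightarrow> real^'n"
  assumes H: "pd_mat H" and eta: "\<eta> > 0" and nu: "\<nu> > 0" and en: "\<eta> * \<nu> < 1" and m: "m \<ge> 1"
    and step: "\<forall>t\<in>{1..m}. xsub_gap f h M xo z (xin (t + 1)) \<le> (1 - 2 / (real t + 1)) * xsub_gap f h M xo z (xin t)
        + 2 / (real t + 1) * (\<delta> t \<bullet> (xbin t - z)
           + (2 / (real t * \<eta>)) / 2 * (qn H (z - xbin t) - qn H (z - xbin (t + 1)))
           + qn (matrix_inv H) (\<delta> t) / (2 * (2 / (real t * \<eta>) - \<nu> * (2 / (real t + 1)))))"
  shows "zeta H \<nu> \<eta> m \<delta> xbin (xbin 1) (xbin (m + 1)) z \<le> - xsub_gap f h M xo z (xin (m + 1))"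
proof -
  define S where "S = 1 / \<eta> * (qn H (z - xbin 1) - qn H (z - xbin (m + 1)))
      + (\<Sum>t = 1..m. real t * (\<delta> t \<bullet> (xbin t - z)))
      + \<eta> / (4 * (1 - \<eta> * \<nu>)) * (\<Sum>t = 1..m. (real t)\<^sup>2 * qn (matrix_inv H) (\<delta> t))"
  have "real m * (real m + 1) / 2 * xsub_gap f h M xo z (xin (m + 1)) \<le> S"
    unfolding S_def by (rule weighted_telescoping[OF eta nu en _ step]) (simp add: qn_matrix_inv_nonneg[OF H])
  moreover have "real m * (real m + 1) > 0" using m by simp
  ultimately have "xsub_gap f h M xo z (xin (m + 1)) \<le> 2 / (real m * (real m + 1)) * S"
    by (simp add: field_simps)
  moreover have "zeta H \<nu> \<eta> m \<delta> xbin (xbin 1) (xbin (m + 1)) z = - (2 / (real m * (real m + 1)) * S)"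
    unfolding zeta_def S_def by (simp add: algebra_simps)
  ultimately show ?thesis by simp
qed

lemma xsub_iterates_mem:
  assumes cX: "convex X" and xin1: "xin 1 \<in> X" and xbin1: "xbin 1 \<in> X"
    and xbin_mem: "\<forall>t\<in>{1..m}. xbin (t + 1) \<in> X"
    and xin_step: "\<forall>t\<in>{1..m}. xin (t + 1) = (2 / (real t + 1)) *\<^sub>R xbin (t + 1) + (1 - 2 / (real t + 1)) *\<^sub>R xin t"
  shows "t \<in> {1..m + 1} \<Longrightarrow> xin t \<in> X \<and> xbin t \<in> X"
proof (induction t)
  case (Suc t)
  show ?case
  proof (cases "t = 0")
    case True
    then show ?thesis using xin1 xbin1 by simp
  next
    case False
    then have t: "t \<in> {1..m}" using Suc.prems by auto
    then have "xin t \<in> X" and xb: "xbin (t + 1) \<in> X" using Suc.IH xbin_mem by auto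
    moreover have "0 \<le> 2 / (real t + 1)" "0 \<le> 1 - 2 / (real t + 1)" using False by (auto simp: field_simps)
    ultimately have "xin (t + 1) \<in> X" using xin_step t convexD[OF cX] by auto
    then show ?thesis using xb by simp
  qed
qed simp

lemma outer_iterates_mem:
  assumes cX: "convex X" and x0: "x 0 \<in> X" and xb0: "xb 0 = x 0"
    and xin1: "\<forall>i. xin i 1 = x i" and xbin1: "\<forall>i. xbin i 1 = xb i"
    and xbin_mem: "\<forall>i. \<forall>t\<in>{1..m i}. xbin i (t + 1) \<in> X"
    and xin_step: "\<forall>i. \<forall>t\<in>{1..m i}.
        xin i (t + 1) = (2 / (real t + 1)) *\<^sub>R xbin i (t + 1) + (1 - 2 / (real t + 1)) *\<^sub>R xin i t"
    and x_out: "\<forall>i. x (Suc i) = xin i (m i + 1)" and xb_out: "\<forall>i. xb (Suc i) = xbin i (m i + 1)"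
  shows "x i \<in> X \<and> xb i \<in> X"
proof (induction i)
  case (Suc i)
  then show ?case
    using xsub_iterates_mem[OF cX, of "xin i" "xbin i" "m i" "m i + 1"] xin1 xbin1 xbin_mem xin_step
      x_out xb_out by auto
qed (simp add: x0 xb0)

lemma xsub_estimate:
  fixes xin xbin xhat d :: "nat \<Rightarrow> real^'n"
  assumes cX: "convex X" and H: "pd_mat H" and nu: "\<nu> > 0" and eta: "\<eta> > 0" "\<eta> < 1 / \<nu>" and m: "m \<ge> 1"
    and sM: "sym_mat M" and M_nonneg: "\<forall>v. 0 \<le> qn M v"
    and f_deriv: "\<forall>z\<in>X. (f has_derivative (\<lambda>v. gf z \<bullet> v)) (at z)"
    and f_grad: "\<forall>a\<in>X. \<forall>w. f a + gf a \<bullet> (w - a) \<le> f w"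
    and f_lip: "grad_lipschitz_on H \<nu> X gf"
    and xin1: "xin 1 \<in> X" and xbin1: "xbin 1 \<in> X"
    and xhat_def: "\<forall>t\<in>{1..m}. xhat t = (2 / (real t + 1)) *\<^sub>R xbin t + (1 - 2 / (real t + 1)) *\<^sub>R xin t"
    and xbin_step: "\<forall>t\<in>{1..m}. xbin (t + 1) \<in> X \<and>
        (\<forall>z\<in>X. (d t + h) \<bullet> xbin (t + 1)
                  + (2 / (real t * \<eta>)) / 2 * qn H (xbin (t + 1) - xbin t)
                  + 1 / 2 * qn M (xbin (t + 1) - xo)
                \<le> (d t + h) \<bullet> z
                  + (2 / (real t * \<eta>)) / 2 * qn H (z - xbin t)
                  + 1 / 2 * qn M (z - xo))"
    and xin_step: "\<forall>t\<in>{1..m}. xin (t + 1) = (2 / (real t + 1)) *\<^sub>R xbin (t + 1) + (1 - 2 / (real t + 1)) *\<^sub>R xin t"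
    and z: "z \<in> X"
  shows "zeta H \<nu> \<eta> m (\<lambda>t. gf (xhat t) - d t) xbin (xbin 1) (xbin (m + 1)) z \<le> - xsub_gap f h M xo z (xin (m + 1))"
proof -
  have en: "\<eta> * \<nu> < 1" using eta nu by (simp add: field_simps)
  have mem: "xin t \<in> X \<and> xbin t \<in> X" if "t \<in> {1..m + 1}" for t
    using xsub_iterates_mem[OF cX xin1 xbin1 _ xin_step that] xbin_step by blast
  have "xsub_gap f h M xo z (xin (t + 1)) \<le> (1 - 2 / (real t + 1)) * xsub_gap f h M xo z (xin t)
        + 2 / (real t + 1) * ((gf (xhat t) - d t) \<bullet> (xbin t - z)
           + (2 / (real t * \<eta>)) / 2 * (qn H (z - xbin t) - qn H (z - xbin (t + 1)))
           + qn (matrix_inv H) (gf (xhat t) - d t) / (2 * (2 / (real t * \<eta>) - \<nu> * (2 / (real t + 1)))))"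
    if t: "t \<in> {1..m}" for t
  proof (rule accelerated_step_estimate[OF H sM M_nonneg])
    have b: "0 < 2 / (real t + 1)" "2 / (real t + 1) \<le> 1" using t by (auto simp: field_simps)
    then show "0 < 2 / (real t + 1)" "2 / (real t + 1) \<le> 1" by auto
    show "2 / (real t * \<eta>) - \<nu> * (2 / (real t + 1)) > 0"
      using step_coefficient_bound(1)[OF _ eta(1) nu en] t by simp
    show xh: "xhat t = (2 / (real t + 1)) *\<^sub>R xbin t + (1 - 2 / (real t + 1)) *\<^sub>R xin t"
      using xhat_def t by blast
    show "xin (t + 1) = (2 / (real t + 1)) *\<^sub>R xbin (t + 1) + (1 - 2 / (real t + 1)) *\<^sub>R xin t"
      using xin_step t by blast
    have xt: "xin t \<in> X" "xbin t \<in> X" "xin (t + 1) \<in> X" "xbin (t + 1) \<in> X" using mem t by auto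
    have xhX: "xhat t \<in> X" unfolding xh using convexD[OF cX xt(2) xt(1)] b by auto
    show "f (xin (t + 1)) \<le> f (xhat t) + gf (xhat t) \<bullet> (xin (t + 1) - xhat t) + \<nu> / 2 * qn H (xin (t + 1) - xhat t)"
      using descent_lemma[OF cX xhX xt(3) H _ f_deriv f_lip] nu by simp
    show "f (xhat t) + gf (xhat t) \<bullet> (xin t - xhat t) \<le> f (xin t)"
      "f (xhat t) + gf (xhat t) \<bullet> (z - xhat t) \<le> f z" using f_grad xhX by blast+
    show "0 \<le> (d t + h + (2 / (real t * \<eta>)) *\<^sub>R (H *v (xbin (t + 1) - xbin t)) + M *v (xbin (t + 1) - xo))
        \<bullet> (z - xbin (t + 1))"
      using H xbin_step t unfolding pd_mat_def by (blast intro: prox_step_optimality[OF cX xt(4) z _ sM])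
  qed
  then show ?thesis by (intro zeta_le_of_recursive_bound[OF H eta(1) nu en m]) blast
qed

lemma combine_optimality_conditions:
  fixes xx x1 xk :: "real^'a" and yy y1 yk :: "real^'b" and ll lam lt lamh b :: "real^'c"
    and A :: "real^'a^'c" and B :: "real^'b^'c" and M D :: "real^'a^'a" and L :: "real^'b^'b" and h :: "real^'a"
    and g :: "real^'b \<Rightarrow> ereal"
  assumes beta: "\<beta> > 0"
    and h_def: "h = - (transpose A *v (lam - \<beta> *\<^sub>R (A *v xk + B *v yk - b)))"
    and lt_def: "lt = lam - \<beta> *\<^sub>R (A *v x1 + B *v yk - b)"
    and lamh_def: "lamh = lam - (\<tau> * \<beta>) *\<^sub>R (A *v x1 + B *v yk - b)"
    and D_def: "D = M - \<beta> *\<^sub>R (transpose A ** A)"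
    and x_opt: "Z \<le> - xsub_gap f h M xk xx x1"
    and g1: "g y1 = ereal r1" and g_yy: "g yy \<noteq> -\<infinity>"
    and y_opt: "\<And>r0. g yy = ereal r0 \<Longrightarrow> 0 \<le> r0 - r1 - lamh \<bullet> (B *v (yy - y1))
             + \<beta> * ((A *v x1 + B *v y1 - b) \<bullet> (B *v (yy - y1))) + (yy - y1) \<bullet> (L *v (y1 - yk))"
  shows "ereal ((xx - x1) \<bullet> (D *v (xk - x1))
               + (yy - y1) \<bullet> ((L + \<beta> *\<^sub>R (transpose B ** B)) *v (yk - y1)
                                     - \<tau> *\<^sub>R (transpose B *v (lam - lt)))
               + (ll - lt) \<bullet> (- (B *v (yk - y1)) + (1 / \<beta>) *\<^sub>R (lam - lt))
               + Z)
    \<le> ereal (f xx) + g yy - (ereal (f x1) + g y1) + ereal ((xx - x1) \<bullet> (- (transpose A *v ll))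
               + (yy - y1) \<bullet> (- (transpose B *v ll))
               + (ll - lt) \<bullet> (A *v xx + B *v yy - b))"
proof (cases "g yy")
  case (real r0)
  have tA: "\<And>u v. (u::real^'a) \<bullet> (transpose A *v v) = (A *v u) \<bullet> v"
    and tB: "\<And>u v. (u::real^'b) \<bullet> (transpose B *v v) = (B *v u) \<bullet> v"
    using inner_matrix_transpose[of _ "transpose A"] inner_matrix_transpose[of _ "transpose B"]
    by (simp_all del: transpose_matrix_vector)
  have gram: "\<And>u. (transpose A ** A) *v u = transpose A *v (A *v u)"
    "\<And>u. (transpose B ** B) *v u = transpose B *v (B *v u)"
    by (simp_all add: matrix_vector_mul_assoc del: transpose_matrix_vector)
  have scale: "\<And>(c::real) (N::real^'a^'a) u. (c *\<^sub>R N) *v u = c *\<^sub>R (N *v u)"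
    "\<And>(c::real) (N::real^'b^'b) u. (c *\<^sub>R N) *v u = c *\<^sub>R (N *v u)"
    by (simp_all add: scaleR_matrix_vector_assoc)
  have lam_lt: "lam - lt = \<beta> *\<^sub>R (A *v x1 + B *v yk - b)" by (simp add: lt_def)
  have h_inner: "\<And>w. h \<bullet> w = - ((A *v w) \<bullet> (lam - \<beta> *\<^sub>R (A *v xk + B *v yk - b)))"
    unfolding h_def by (simp add: inner_commute tA del: transpose_matrix_vector)
  have "(xx - x1) \<bullet> (D *v (xk - x1))
               + (yy - y1) \<bullet> ((L + \<beta> *\<^sub>R (transpose B ** B)) *v (yk - y1)
                                     - \<tau> *\<^sub>R (transpose B *v (lam - lt)))
               + (ll - lt) \<bullet> (- (B *v (yk - y1)) + (1 / \<beta>) *\<^sub>R (lam - lt))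
               + Z
    \<le> f xx + r0 - (f x1 + r1) + ((xx - x1) \<bullet> (- (transpose A *v ll))
               + (yy - y1) \<bullet> (- (transpose B *v ll))
               + (ll - lt) \<bullet> (A *v xx + B *v yy - b))"
    using x_opt y_opt[OF real] beta unfolding xsub_gap_def D_def h_inner lamh_def lam_lt lt_def
    by (simp add: algebra_simps inner_add_left inner_add_right inner_diff_left inner_diff_right
        matrix_vector_mult_add_rdistrib matrix_vector_mult_diff_rdistrib tA tB gram scale
        matrix_vector_mult_uminus_right inner_commute del: transpose_matrix_vector)
  then show ?thesis by (simp add: g1 real)
qed (use g1 g_yy in auto)

theorem theorem2p2:
  fixes X :: "(real^'a) set" and Y :: "(real^'b) set"
    and A :: "real^'a^'c" and B :: "real^'b^'c" and b :: "real^'c"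
    and g :: "real^'b \<Rightarrow> ereal"
    and N :: nat and fs :: "nat \<Rightarrow> real^'a \<Rightarrow> real" and gfs :: "nat \<Rightarrow> real^'a \<Rightarrow> real^'a"
    and f :: "real^'a \<Rightarrow> real" and gf :: "real^'a \<Rightarrow> real^'a"
    and H :: "real^'a^'a" and \<nu> :: real
    and \<beta> :: real and L :: "real^'b^'b" and \<tau> s :: real
    and m :: "nat \<Rightarrow> nat" and \<eta> :: "nat \<Rightarrow> real" and M :: "nat \<Rightarrow> real^'a^'a"
    and x xb :: "nat \<Rightarrow> real^'a" and y :: "nat \<Rightarrow> real^'b" and lam lamh :: "nat \<Rightarrow> real^'c"
    and h :: "nat \<Rightarrow> real^'a"
    and xin xbin xhat d e :: "nat \<Rightarrow> nat \<Rightarrow> real^'a" and \<xi> :: "nat \<Rightarrow> nat \<Rightarrow> nat"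
    and k :: nat and xx :: "real^'a" and yy :: "real^'b" and ll :: "real^'c"
  assumes X_nonempty: "X \<noteq> {}" and X_closed: "closed X" and X_convex: "convex X"
    and Y_nonempty: "Y \<noteq> {}" and Y_closed: "closed Y" and Y_convex: "convex Y"
    and g_proper_convex: "proper_convex_on Y g"
    and N_pos: "N \<ge> 1"
    and f_def: "f = (\<lambda>z. (1 / real N) * (\<Sum>j = 1..N. fs j z))"
    and fs_convex: "\<forall>j\<in>{1..N}. convex_on UNIV (fs j)"
    and fs_C1: "\<exists>U. open U \<and> X \<subseteq> U \<and>
        (\<forall>j\<in>{1..N}. (\<forall>z\<in>U. (fs j has_derivative (\<lambda>v. gfs j z \<bullet> v)) (at z))
                       \<and> continuous_on U (gfs j))"
    and gf_def: "gf = (\<lambda>z. (1 / real N) *\<^sub>R (\<Sum>j = 1..N. gfs j z))"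
    and H_pd: "pd_mat H" and nu_pos: "\<nu> > 0"
    and lipschitz: "\<forall>j\<in>{1..N}. \<forall>z1\<in>X. \<forall>z2\<in>X.
        sqrt (qn (matrix_inv H) (gfs j z1 - gfs j z2)) \<le> \<nu> * sqrt (qn H (z1 - z2))"
    and beta_pos: "\<beta> > 0" and L_psd: "psd_mat L"
    and tau_s: "(\<tau>, s) \<in> Delta_region"
    \<comment> \<open>start\<close>
    and x0: "x 0 \<in> X" and y0: "y 0 \<in> Y" and xb0: "xb 0 = x 0"
    \<comment> \<open>parameter choices at every outer iteration\<close>
    and m_pos: "\<forall>i. m i \<ge> 1" and eta_pos: "\<forall>i. \<eta> i > 0"
    and M_sym: "\<forall>i. sym_mat (M i)"
    and D_psd: "\<forall>i. psd_mat (M i - \<beta> *\<^sub>R (transpose A ** A))"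
    and h_def: "\<forall>i. h i = - (transpose A *v (lam i - \<beta> *\<^sub>R (A *v x i + B *v y i - b)))"
    \<comment> \<open>subroutine xsub at outer iteration i\<close>
    and xin1: "\<forall>i. xin i 1 = x i" and xbin1: "\<forall>i. xbin i 1 = xb i"
    and xi_range: "\<forall>i. \<forall>t\<in>{1..m i}. \<xi> i t \<in> {1..N}"
    and xhat_def: "\<forall>i. \<forall>t\<in>{1..m i}.
        xhat i t = (2 / (real t + 1)) *\<^sub>R xbin i t + (1 - 2 / (real t + 1)) *\<^sub>R xin i t"
    and d_def: "\<forall>i. \<forall>t\<in>{1..m i}. d i t = gfs (\<xi> i t) (xhat i t) + e i t"
    and xbin_step: "\<forall>i. \<forall>t\<in>{1..m i}. xbin i (t + 1) \<in> X \<and>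
        (\<forall>z\<in>X. (d i t + h i) \<bullet> xbin i (t + 1)
                  + (2 / (real t * \<eta> i)) / 2 * qn H (xbin i (t + 1) - xbin i t)
                  + 1 / 2 * qn (M i) (xbin i (t + 1) - x i)
                \<le> (d i t + h i) \<bullet> z
                  + (2 / (real t * \<eta> i)) / 2 * qn H (z - xbin i t)
                  + 1 / 2 * qn (M i) (z - x i))"
    and xin_step: "\<forall>i. \<forall>t\<in>{1..m i}.
        xin i (t + 1) = (2 / (real t + 1)) *\<^sub>R xbin i (t + 1) + (1 - 2 / (real t + 1)) *\<^sub>R xin i t"
    and x_out: "\<forall>i. x (Suc i) = xin i (m i + 1)" and xb_out: "\<forall>i. xb (Suc i) = xbin i (m i + 1)"
    \<comment> \<open>multiplier and y updates\<close>
    and lamh_def: "\<forall>i. lamh i = lam i - (\<tau> * \<beta>) *\<^sub>R (A *v x (Suc i) + B *v y i - b)"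
    and y_step: "\<forall>i. y (Suc i) \<in> Y \<and>
        (\<forall>z\<in>Y. aug_lag f g A B b \<beta> (x (Suc i)) (y (Suc i)) (lamh i)
                  + ereal (1 / 2 * qn L (y (Suc i) - y i))
                \<le> aug_lag f g A B b \<beta> (x (Suc i)) z (lamh i) + ereal (1 / 2 * qn L (z - y i)))"
    and lam_step: "\<forall>i. lam (Suc i) = lamh i - (s * \<beta>) *\<^sub>R (A *v x (Suc i) + B *v y (Suc i) - b)"
    \<comment> \<open>the fixed outer index and the test point\<close>
    and eta_k: "\<eta> k < 1 / \<nu>"
    and xx_in: "xx \<in> X" and yy_in: "yy \<in> Y"
  shows
    "let lt = lam k - \<beta> *\<^sub>R (A *v x (Suc k) + B *v y k - b);
         D = M k - \<beta> *\<^sub>R (transpose A ** A);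
         \<delta> = (\<lambda>t. gf (xhat k t) - d k t)
     in ereal (f xx) + g yy - (ereal (f (x (Suc k))) + g (y (Suc k)))
        + ereal ((xx - x (Suc k)) \<bullet> (- (transpose A *v ll))
               + (yy - y (Suc k)) \<bullet> (- (transpose B *v ll))
               + (ll - lt) \<bullet> (A *v xx + B *v yy - b))
      \<ge> ereal ((xx - x (Suc k)) \<bullet> (D *v (x k - x (Suc k)))
               + (yy - y (Suc k)) \<bullet> ((L + \<beta> *\<^sub>R (transpose B ** B)) *v (y k - y (Suc k))
                                     - \<tau> *\<^sub>R (transpose B *v (lam k - lt)))
               + (ll - lt) \<bullet> (- (B *v (y k - y (Suc k))) + (1 / \<beta>) *\<^sub>R (lam k - lt))
               + zeta H \<nu> (\<eta> k) (m k) \<delta> (xbin k) (xb k) (xb (Suc k)) xx)"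
proof -
  obtain U where "X \<subseteq> U"
    and "\<forall>j\<in>{1..N}. \<forall>z\<in>U. (fs j has_derivative (\<lambda>v. gfs j z \<bullet> v)) (at z)"
    using fs_C1 by blast
  then have "\<forall>j\<in>{1..N}. \<forall>z\<in>X. (fs j has_derivative (\<lambda>v. gfs j z \<bullet> v)) (at z)" by blast
  note f_smooth = average_of_smooth_convex[OF N_pos H_pd f_def gf_def fs_convex this lipschitz]
  have M_nonneg: "\<forall>v. 0 \<le> qn (M k) v"
    using qn_nonneg_of_psd_minus_gram[OF D_psd[THEN spec[of _ k]]] beta_pos by simp
  have "x k \<in> X \<and> xb k \<in> X"
    using outer_iterates_mem[OF X_convex x0 xb0 xin1 xbin1 _ xin_step x_out xb_out] xbin_step by blast
  then have "xin k 1 \<in> X" "xbin k 1 \<in> X" using xin1 xbin1 by simp_all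
  from xsub_estimate[OF X_convex H_pd nu_pos eta_pos[THEN spec[of _ k]] eta_k m_pos[THEN spec[of _ k]]
        M_sym[THEN spec[of _ k]] M_nonneg f_smooth this xhat_def[THEN spec[of _ k]]
        xbin_step[THEN spec[of _ k]] xin_step[THEN spec[of _ k]] xx_in]
  have x_opt: "zeta H \<nu> (\<eta> k) (m k) (\<lambda>t. gf (xhat k t) - d k t) (xbin k) (xb k) (xb (Suc k)) xx
      \<le> - xsub_gap f (h k) (M k) (x k) xx (x (Suc k))"
    using xbin1 x_out xb_out by simp
  obtain r1 where g1: "g (y (Suc k)) = ereal r1"
    using aug_lag_argmin_finite[OF g_proper_convex] y_step by blast
  have g_yy: "g yy \<noteq> -\<infinity>" using g_proper_convex yy_in unfolding proper_convex_on_def by blast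
  have sL: "sym_mat L" using L_psd unfolding psd_mat_def by blast
  show ?thesis unfolding Let_def
    by (rule combine_optimality_conditions[OF beta_pos h_def[rule_format] refl lamh_def[rule_format] refl
          x_opt g1 g_yy])
      (use aug_lag_step_optimality[OF Y_convex _ yy_in sL g_proper_convex g1] y_step in blast)
qed

end
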